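(* Let $V$ be a vector space over a field $F$, let $T:V\to V$ (not necessarily linear) have a vanishing polynomial of degree $m$, and let $T_1:V\to V$ satisfy $T_1^l=T^k$ for integers $k\ge0$, $l\ge1$. Then $T_1$ has a vanishing polynomial of degree at most $ml$.
   Context: For $T:V\to V$ (not necessarily linear), $T^0=I$, $T^i=T\circ T^{i-1}$, and $p(T)(v)=\sum a_iT^i(v)$ for $p(x)=\sum a_ix^i$. A vanishing polynomial of $T$ is a nonzero $p\in F[x]$ with $p(T)(v)=0$ for all $v\in V$. *)

theory Defs
  imports Main "HOL-Computational_Algebra.Polynomial"
begin

definition poly_apply :: "('f::field \<Rightarrow> 'v::ab_group_add \<Rightarrow> 'v) \<Rightarrow> 'f poly \<Rightarrow> ('v \<Rightarrow> 'v) \<Rightarrow> 'v \<Rightarrow> 'v" where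
  "poly_apply scale p T v = (\<Sum>i\<le>degree p. scale (coeff p i) ((T ^^ i) v))"

definition vanishing_poly :: "('f::field \<Rightarrow> 'v::ab_group_add \<Rightarrow> 'v) \<Rightarrow> ('v \<Rightarrow> 'v) \<Rightarrow> 'f poly \<Rightarrow> bool" where
  "vanishing_poly scale T p \<longleftrightarrow> p \<noteq> 0 \<and> (\<forall>v. poly_apply scale p T v = 0)"

end

theory Submission
  imports Defs
begin

text \<open>Among the m + 1 polynomials 1, x^k, x^2k, ..., x^mk, reduced modulo p, there is a linear
  dependence, i.e. a nonzero r of degree at most m with p dividing r(x^k); hence r(T^k) = 0.
  Then q = r(x^l) has degree at most m l and q(T1) = r(T1^l) = r(T^k) = 0.  Substituting a
  power of x into a polynomial corresponds to substituting the same power of the map, which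
  holds without linearity of T because only powers of the single map T are involved.\<close>

lemma (in vector_space) nontrivial_combination_in_small_span:
  assumes "finite I" "finite B" "card B < card I" "x ` I \<subseteq> span B"
  shows "\<exists>c. (\<exists>i\<in>I. c i \<noteq> 0) \<and> (\<Sum>i\<in>I. c i *s x i) = 0"
proof (cases "inj_on x I")
  case True
  have "\<not> independent (x ` I)"
    using independent_span_bound[OF \<open>finite B\<close> _ \<open>x ` I \<subseteq> span B\<close>] assms(3)
      card_image[OF True] by fastforce
  then obtain u where "\<exists>v\<in>x ` I. u v \<noteq> 0" "(\<Sum>v\<in>x ` I. u v *s v) = 0"
    using dependent_finite \<open>finite I\<close> by auto
  then show ?thesis
    by (intro exI[of _ "u \<circ> x"]) (auto simp: sum.reindex[OF True])
next
  case False
  then obtain i j where ij: "i \<in> I" "j \<in> I" "i \<noteq> j" "x i = x j"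
    unfolding inj_on_def by auto
  define c where "c = (\<lambda>n. if n = i then 1 else if n = j then - 1 else 0 :: 'a)"
  have "(\<Sum>n\<in>I. c n *s x n) = (\<Sum>n\<in>{i, j}. c n *s x n)"
    by (rule sum.mono_neutral_right) (use ij \<open>finite I\<close> in \<open>auto simp: c_def\<close>)
  also have "\<dots> = 0"
    using ij by (simp add: c_def)
  finally show ?thesis
    using ij by (intro exI[of _ c]) (auto simp: c_def)
qed

interpretation poly_smult: vector_space "smult :: 'f::field \<Rightarrow> 'f poly \<Rightarrow> 'f poly"
  by unfold_locales (simp_all add: smult_add_right smult_add_left)

lemma poly_in_span_monoms:
  fixes g :: "'f::field poly"
  assumes "degree g < n"
  shows "g \<in> poly_smult.span ((\<lambda>i. monom 1 i) ` {..<n})"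
proof -
  have "{..n - 1} = {..<n}"
    using assms by auto
  then have "g = (\<Sum>i<n. smult (coeff g i) (monom 1 i))"
    using poly_as_sum_of_monoms'[of g "n - 1"] assms by (simp add: smult_monom)
  also have "\<dots> \<in> poly_smult.span ((\<lambda>i. monom 1 i) ` {..<n})"
    by (intro poly_smult.span_sum poly_smult.span_scale poly_smult.span_base) auto
  finally show ?thesis .
qed

lemma pcompose_monom: "pcompose (monom c n) s = smult c (s ^ n)"
  by (induction n) (simp_all add: monom_0 monom_Suc pcompose_pCons)

lemma exists_pcompose_dvd:
  fixes p s :: "'f::field poly"
  assumes "p \<noteq> 0"
  shows "\<exists>r. r \<noteq> 0 \<and> degree r \<le> degree p \<and> p dvd pcompose r s"
proof -
  let ?m = "degree p" and ?B = "(\<lambda>i. monom (1::'f) i) ` {..<degree p}"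
  have "s ^ i mod p \<in> poly_smult.span ?B" for i
    using degree_mod_less'[OF assms, of "s ^ i"] poly_in_span_monoms[of "s ^ i mod p"]
      poly_smult.span_zero by (cases "s ^ i mod p = 0") auto
  then have "(\<lambda>i. s ^ i mod p) ` {..?m} \<subseteq> poly_smult.span ?B"
    by blast
  moreover have "card ?B < card {..?m}"
    using card_image_le[of "{..<?m}" "\<lambda>i. monom (1::'f) i"] by simp
  ultimately obtain c where c: "\<exists>i\<le>?m. c i \<noteq> 0" "(\<Sum>i\<le>?m. smult (c i) (s ^ i mod p)) = 0"
    using poly_smult.nontrivial_combination_in_small_span[of "{..?m}" ?B "\<lambda>i. s ^ i mod p"]
    by auto
  define r where "r = (\<Sum>i\<le>?m. monom (c i) i)"
  have coeff_r: "coeff r j = (if j \<le> ?m then c j else 0)" for j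
    by (simp add: r_def coeff_sum coeff_monom)
  have "r \<noteq> 0"
    using c(1) coeff_r by (metis coeff_0)
  moreover have "degree r \<le> ?m"
    by (rule degree_le) (simp add: coeff_r)
  moreover have "pcompose r s mod p = 0"
  proof -
    have "pcompose r s mod p = (\<Sum>i\<le>?m. smult (c i) (s ^ i)) mod p"
      by (simp add: r_def pcompose_sum pcompose_monom)
    also have "\<dots> = (\<Sum>i\<le>?m. smult (c i) (s ^ i mod p)) mod p"
      by (simp only: mod_smult_left[symmetric] mod_sum_eq)
    finally show ?thesis
      using c(2) by simp
  qed
  ultimately show ?thesis
    by blast
qed

lemma poly_apply_0 [simp]: "poly_apply scale 0 T v = scale 0 v"
  by (simp add: poly_apply_def)

context
  fixes scale :: "'f::field \<Rightarrow> 'v::ab_group_add \<Rightarrow> 'v"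
  assumes vs: "vector_space scale"
begin

interpretation V: vector_space scale by (rule vs)

lemma poly_apply_eq_sum:
  assumes "degree p \<le> N"
  shows "poly_apply scale p T v = (\<Sum>i\<le>N. scale (coeff p i) ((T ^^ i) v))"
  unfolding poly_apply_def
  by (rule sum.mono_neutral_left) (use assms in \<open>auto simp: coeff_eq_0\<close>)

lemma poly_apply_add:
  "poly_apply scale (p + q) T v = poly_apply scale p T v + poly_apply scale q T v"
proof -
  let ?N = "max (degree p) (degree q)"
  have "degree (p + q) \<le> ?N"
    by (rule degree_add_le) auto
  then show ?thesis
    by (simp add: poly_apply_eq_sum[of _ ?N] coeff_add V.scale_left_distrib sum.distrib)
qed

lemma poly_apply_smult:
  "poly_apply scale (smult a p) T v = scale a (poly_apply scale p T v)"
  using degree_smult_le[of a p]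
  by (simp add: poly_apply_eq_sum[of _ "degree p"] V.scale_sum_right)

lemma poly_apply_pCons:
  "poly_apply scale (pCons a r) T v = scale a v + poly_apply scale r T (T v)"
proof -
  have "poly_apply scale (pCons a r) T v
      = (\<Sum>i\<le>Suc (degree r). scale (coeff (pCons a r) i) ((T ^^ i) v))"
    by (rule poly_apply_eq_sum) simp
  also have "\<dots> = scale a v + (\<Sum>i\<le>degree r. scale (coeff r i) ((T ^^ i) (T v)))"
    by (subst sum.atMost_Suc_shift) (simp add: funpow_Suc_right del: funpow.simps)
  finally show ?thesis
    by (simp add: poly_apply_def)
qed

lemma poly_apply_dvd_vanishing:
  assumes vanish: "\<And>v. poly_apply scale p T v = 0" and "p dvd f"
  shows "poly_apply scale f T v = 0"
proof -
  obtain s where "f = p * s"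
    using \<open>p dvd f\<close> by blast
  moreover have "poly_apply scale (p * s) T v = 0" for v
  proof (induction s arbitrary: v)
    case (pCons a s)
    have "p * pCons a s = smult a p + pCons 0 (p * s)"
      by (simp add: algebra_simps)
    then show ?case
      by (simp add: pCons poly_apply_add poly_apply_smult poly_apply_pCons vanish)
  qed simp
  ultimately show ?thesis
    by simp
qed

lemma poly_apply_monom_mult:
  "poly_apply scale (monom 1 n * g) T v = poly_apply scale g T ((T ^^ n) v)"
  by (induction n arbitrary: v)
    (simp_all add: monom_0 monom_Suc poly_apply_pCons funpow_Suc_right del: funpow.simps)

lemma poly_apply_pcompose_monom:
  "poly_apply scale (pcompose r (monom 1 n)) T v = poly_apply scale r (T ^^ n) v"
  by (induction r arbitrary: v)
    (simp_all add: pcompose_pCons poly_apply_add poly_apply_pCons poly_apply_monom_mult)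

end

theorem mainTheorem17:
  fixes scale :: "'f::field \<Rightarrow> 'v::ab_group_add \<Rightarrow> 'v"
    and T T1 :: "'v \<Rightarrow> 'v" and p :: "'f poly" and m k l :: nat
  assumes "vector_space scale"
    and "vanishing_poly scale T p" and "degree p = m"
    and "l \<ge> 1" and "T1 ^^ l = T ^^ k"
  shows "\<exists>q. vanishing_poly scale T1 q \<and> degree q \<le> m * l"
proof -
  have "p \<noteq> 0" and vanish: "\<And>v. poly_apply scale p T v = 0"
    using assms(2) by (auto simp: vanishing_poly_def)
  then obtain r where r: "r \<noteq> 0" "degree r \<le> m" "p dvd pcompose r (monom 1 k)"
    using exists_pcompose_dvd assms(3) by blast
  define q where "q = pcompose r (monom 1 l)"
  have "q \<noteq> 0"
    using r(1) assms(4) pcompose_eq_0[of r "monom 1 l"] by (auto simp: q_def degree_monom_eq)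
  moreover have "degree q \<le> m * l"
    using r(2) by (simp add: q_def degree_pcompose degree_monom_eq)
  moreover have "poly_apply scale q T1 v = 0" for v
    using poly_apply_pcompose_monom[OF assms(1)] assms(5)
      poly_apply_dvd_vanishing[OF assms(1) vanish r(3)] by (simp add: q_def)
  ultimately show ?thesis
    unfolding vanishing_poly_def by blast
qed

end
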